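(* Let $h_1,h_2\in\mathbb{C}\setminus\{0\}$ with $|h_1|>|h_2|$, deadlines $D_1<D_2$, minimum blocklength $\hat m>0$, power budget $P_{\max}>0$, packet sizes $N_1,N_2>0$ and error probabilities $\epsilon_1,\epsilon_2\in(0,1)$. For $k=1,2$ define, for $m>0,\gamma>0$, $$F_k(m,\gamma)=\sqrt{\frac{1}{m}\left(1-\frac{1}{(\gamma+1)^2}\right)}\,\frac{Q^{-1}(\epsilon_k)}{\ln 2}-\log_2(1+\gamma)+\frac{N_k}{m},$$ and let $\Gamma_k(m)$ denote the implicit function defined by $F_k(m,\Gamma_k(m))=0$, $\Gamma_k(m)>0$. Consider the problem $$\min_{\{m_k,p_k,\gamma_k\}_{k=1,2}} m_1p_1+m_2p_2$$ subject to $F_k(m_k,\gamma_k)=0$, $\hat m\le m_k\le D_k$, $p_k\ge0$ for $k=1,2$, $p_1+p_2\le P_{\max}$, $\gamma_1=\frac{p_1|h_1|^2}{p_2|h_1|^2+1}$, $\gamma_2=\frac{p_2|h_2|^2}{p_1|h_2|^2+1}$. If $\frac{Q^{-1}(\epsilon_k)}{\sqrt{N_k}}\le \frac{2\sqrt{\ln 2}}{4-\sqrt2}=0.64394\ldots$ for $k=1,2$ and the problem is feasible, then an optimal solution is $$m_k^*=D_k,\quad \gamma_k^*=\Gamma_k(D_k)\ (k=1,2),$$ $$p_1^*=\frac{\gamma_1^*|h_2|^2+\gamma_1^*\gamma_2^*|h_1|^2}{|h_1|^2|h_2|^2(1-\gamma_1^*\gamma_2^* )},\quad p_2^*=\frac{\gamma_2^*|h_1|^2+\gamma_1^*\gamma_2^*|h_2|^2}{|h_1|^2|h_2|^2(1-\gamma_1^*\gamma_2^*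 )}.$$
   Context: $Q^{-1}$ is the inverse of the Gaussian Q-function. The setting is a two-user single-antenna downlink with superposition coding and unit noise variances, in which both receivers treat the other receiver's signal as noise. Blocklengths $m_k$ are treated as continuous variables. The constraint $F_k(m_k,\gamma_k)=0$ is the finite-blocklength rate relation $\frac{N_k}{m_k}=\log_2(1+\gamma_k)-\sqrt{\frac{1}{m_k}\big(1-\frac{1}{(1+\gamma_k)^2}\big)}\frac{Q^{-1}(\epsilon_k)}{\ln2}$. *)

theory Defs
  imports "HOL-Probability.Probability"
begin

definition Qfun :: "real \<Rightarrow> real" where
  "Qfun x = (LINT t:{x<..}|lborel. std_normal_density t)"

definition Qinv :: "real \<Rightarrow> real" where
  "Qinv e = (THE x. Qfun x = e)"

definition Ffb :: "real \<Rightarrow> real \<Rightarrow> real \<Rightarrow> real \<Rightarrow> real" where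
  "Ffb e N m \<gamma> = sqrt ((1 / m) * (1 - 1 / (\<gamma> + 1)\<^sup>2)) * Qinv e / ln 2
                   - log 2 (1 + \<gamma>) + N / m"

definition Gam :: "real \<Rightarrow> real \<Rightarrow> real \<Rightarrow> real" where
  "Gam e N m = (THE \<gamma>. \<gamma> > 0 \<and> Ffb e N m \<gamma> = 0)"

definition feasible ::
  "complex \<Rightarrow> complex \<Rightarrow> real \<Rightarrow> real \<Rightarrow> real \<Rightarrow> real \<Rightarrow> real \<Rightarrow> real \<Rightarrow> real \<Rightarrow> real
   \<Rightarrow> real \<Rightarrow> real \<Rightarrow> real \<Rightarrow> real \<Rightarrow> real \<Rightarrow> real \<Rightarrow> bool" where
  "feasible h1 h2 D1 D2 mhat Pmax N1 N2 e1 e2 m1 m2 p1 p2 \<gamma>1 \<gamma>2 \<longleftrightarrow>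
     Ffb e1 N1 m1 \<gamma>1 = 0 \<and> Ffb e2 N2 m2 \<gamma>2 = 0 \<and>
     mhat \<le> m1 \<and> m1 \<le> D1 \<and> mhat \<le> m2 \<and> m2 \<le> D2 \<and>
     p1 \<ge> 0 \<and> p2 \<ge> 0 \<and> p1 + p2 \<le> Pmax \<and>
     \<gamma>1 = p1 * (cmod h1)\<^sup>2 / (p2 * (cmod h1)\<^sup>2 + 1) \<and>
     \<gamma>2 = p2 * (cmod h2)\<^sup>2 / (p1 * (cmod h2)\<^sup>2 + 1)"

end

theory Submission
  imports Defs
begin

text \<open>
  Put u = sqrt m and n = N ln 2. The rate relation F(m, g) = 0 becomes
  ln (1 + g) u^2 - Q sqrt (V g) u = n with V g = 1 - 1/(1 + g)^2, whose left side increases with u,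
  and increases with g at a root because sqrt (V g) / ln (1 + g) decreases. Hence Gamma(D) is the
  unique root at u = sqrt D, and Gamma(D) <= g for every root (m, g) with m <= D.
  In the variable v = u sqrt g = sqrt (m g) the relation is again a quadratic equation
  b(g) v^2 - Q a(g) v = n with a(g) = sqrt (2 + g) / (1 + g) and b(g) = ln (1 + g) / g; its positive
  root is nondecreasing in g as soon as Q a' >= b' v along it, and this follows from the bound on
  Q / sqrt N. So D Gamma(D) <= m g.
  Finally the two SINR equations determine the powers by the closed form of the theorem, which is
  nondecreasing in both SINRs; so m_k = D_k, g_k = Gamma_k(D_k) minimises each m_k p_k separately.
\<close>

lemma ln_one_plus_ge:
  fixes x :: real
  assumes "0 \<le> x"
  shows "2 * x / (2 + x) \<le> ln (1 + x)"
proof -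
  let ?h = "\<lambda>x::real. ln (1 + x) - 2 * x / (2 + x)"
  have "?h 0 \<le> ?h x"
  proof (rule DERIV_nonneg_imp_nondecreasing[OF assms])
    fix t :: real
    assume t: "0 \<le> t" "t \<le> x"
    have "(?h has_real_derivative 1 / (1 + t) - (2 * (2 + t) - 2 * t) / (2 + t)^2) (at t)"
      using t by (auto intro!: derivative_eq_intros simp: power2_eq_square)
    moreover have "1 / (1 + t) - (2 * (2 + t) - 2 * t) / (2 + t)^2 = t^2 / ((1 + t) * (2 + t)^2)"
      using t by (simp add: divide_simps) (simp add: algebra_simps power2_eq_square)
    ultimately show "\<exists>y. (?h has_real_derivative y) (at t) \<and> 0 \<le> y"
      using t by auto
  qed
  then show ?thesis by simp
qed

lemma one_minus_exp_div_square_antimono: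
  fixes y1 y2 :: real
  assumes "0 < y1" "y1 \<le> y2"
  shows "(1 - exp (-2 * y2)) / y2^2 \<le> (1 - exp (-2 * y1)) / y1^2"
proof (rule DERIV_nonpos_imp_nonincreasing[OF assms(2)])
  fix y :: real
  assume "y1 \<le> y" "y \<le> y2"
  then have y: "y > 0" using assms by simp
  let ?d = "(2 * exp (-2 * y) * y^2 - (1 - exp (-2 * y)) * (2 * y)) / (y^2)^2"
  have "((\<lambda>y. (1 - exp (-2 * y)) / y^2) has_real_derivative ?d) (at y)"
    using y by (auto intro!: derivative_eq_intros simp: power2_eq_square)
  moreover have "?d \<le> 0"
  proof -
    have "(1 + 2 * y) * exp (-2 * y) \<le> exp (2 * y) * exp (-2 * y)"
      using exp_ge_add_one_self[of "2 * y"] by (simp add: mult_right_mono)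
    then have "(1 + 2 * y) * exp (-2 * y) \<le> 1"
      by (simp add: exp_add[symmetric])
    moreover have "0 \<le> y * exp (-2 * y)"
      using y by simp
    ultimately have "(1 + y) * exp (-2 * y) \<le> 1"
      by (simp add: algebra_simps)
    with y have "2 * y * ((1 + y) * exp (-2 * y) - 1) \<le> 0"
      by (simp add: mult_nonneg_nonpos)
    moreover have "2 * exp (-2 * y) * y^2 - (1 - exp (-2 * y)) * (2 * y)
                   = 2 * y * ((1 + y) * exp (-2 * y) - 1)"
      by (simp add: algebra_simps power2_eq_square)
    ultimately show ?thesis
      using y by (simp add: divide_nonpos_pos)
  qed
  ultimately show "\<exists>d. ((\<lambda>y. (1 - exp (-2 * y)) / y^2) has_real_derivative d) (at y) \<and> d \<le> 0"
    by blast
qed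

lemma quadratic_strict_mono:
  fixes b c u v :: real
  assumes "b > 0" "0 < u" "u < v" "b * u^2 - c * u > 0"
  shows "b * u^2 - c * u < b * v^2 - c * v"
proof -
  have "u * (b * u - c) > 0"
    using assms(4) by (simp add: algebra_simps power2_eq_square)
  with assms(2) have "b * u - c > 0"
    by (simp add: zero_less_mult_iff)
  moreover have "b * v > 0"
    using assms by simp
  ultimately have "b * (u + v) - c > 0"
    by (simp add: algebra_simps)
  with assms(3) have "(v - u) * (b * (u + v) - c) > 0"
    by simp
  then show ?thesis
    by (simp add: algebra_simps power2_eq_square)
qed

definition pos_root :: "real \<Rightarrow> real \<Rightarrow> real \<Rightarrow> real" where
  "pos_root b c n = (c + sqrt (c^2 + 4 * b * n)) / (2 * b)"

lemma pos_root_solves: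
  assumes "b > 0" "n > 0"
  shows "pos_root b c n > 0" "b * (pos_root b c n)^2 - c * pos_root b c n = n"
proof -
  define S where "S = sqrt (c^2 + 4 * b * n)"
  have "c^2 < c^2 + 4 * b * n"
    using assms by simp
  then have "\<bar>c\<bar> < S"
    unfolding S_def by (metis real_sqrt_abs real_sqrt_less_mono)
  then show "pos_root b c n > 0"
    using assms unfolding pos_root_def S_def[symmetric] by simp
  have S2: "S^2 = c^2 + 4 * b * n"
    unfolding S_def using assms by (simp add: add_nonneg_pos)
  have "b * ((c + S) / (2 * b))^2 - c * ((c + S) / (2 * b)) = (S^2 - c^2) / (4 * b)"
    using assms by (simp add: divide_simps) algebra
  then show "b * (pos_root b c n)^2 - c * pos_root b c n = n"
    using assms unfolding pos_root_def S_def[symmetric] S2 by simp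
qed

lemma pos_root_unique:
  assumes "b > 0" "n > 0" "v > 0" "b * v^2 - c * v = n"
  shows "v = pos_root b c n"
proof -
  have "v * (b * v - c) > 0"
    using assms(2,4) by (simp add: algebra_simps power2_eq_square)
  then have "b * v - c > 0"
    using assms(3) by (simp add: zero_less_mult_iff)
  moreover have "b * v > 0"
    using assms(1,3) by simp
  ultimately have "2 * b * v - c \<ge> 0"
    by simp
  moreover have "(2 * b * v - c)^2 = c^2 + 4 * b * n"
    unfolding assms(4)[symmetric] by algebra
  ultimately have "sqrt (c^2 + 4 * b * n) = 2 * b * v - c"
    by (metis real_sqrt_abs abs_of_nonneg)
  then show ?thesis
    unfolding pos_root_def using assms(1) by (simp add: field_simps)
qed

lemma has_real_derivative_pos_root:
  fixes b c :: "real \<Rightarrow> real"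
  assumes b: "(b has_real_derivative b') (at x)" and c: "(c has_real_derivative c') (at x)"
    and "b x > 0" "n > 0"
  shows "((\<lambda>x. pos_root (b x) (c x) n) has_real_derivative
           pos_root (b x) (c x) n * (c' - b' * pos_root (b x) (c x) n)
             / sqrt ((c x)^2 + 4 * b x * n)) (at x)"
proof -
  define S where "S = sqrt ((c x)^2 + 4 * b x * n)"
  have W: "(c x)^2 + 4 * b x * n > 0"
    using assms(3,4) by (simp add: add_nonneg_pos)
  then have S: "S > 0" "S^2 = (c x)^2 + 4 * b x * n"
    unfolding S_def by auto
  have "((\<lambda>x. pos_root (b x) (c x) n) has_real_derivative
          ((c' + (2 * c x * c' + 4 * b' * n) / (2 * S)) * (2 * b x) - (c x + S) * (2 * b'))
            / (2 * b x)^2) (at x)"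
    unfolding pos_root_def S_def using b c assms(3) W
    by (auto intro!: derivative_eq_intros simp: power2_eq_square divide_simps)
  moreover have "n = (S^2 - (c x)^2) / (4 * b x)"
    using S assms(3) by (simp add: field_simps)
  then have "((c' + (2 * c x * c' + 4 * b' * n) / (2 * S)) * (2 * b x) - (c x + S) * (2 * b'))
               / (2 * b x)^2
             = ((c x + S) / (2 * b x)) * (c' - b' * ((c x + S) / (2 * b x))) / S"
    using S(1) assms(3) by (simp add: divide_simps) algebra
  ultimately show ?thesis
    unfolding pos_root_def S_def by simp
qed

definition sqrt_dispersion :: "real \<Rightarrow> real" where
  "sqrt_dispersion g = sqrt (1 - 1 / (g + 1)^2)"

lemma sqrt_dispersion_mono:
  assumes "0 \<le> g1" "g1 \<le> g2"
  shows "sqrt_dispersion g1 \<le> sqrt_dispersion g2"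
proof -
  have "(g1 + 1)^2 \<le> (g2 + 1)^2"
    using assms by (intro power_mono) auto
  then have "1 / (g2 + 1)^2 \<le> 1 / (g1 + 1)^2"
    using assms by (intro divide_left_mono) auto
  then show ?thesis
    unfolding sqrt_dispersion_def by simp
qed

lemma sqrt_dispersion_nonneg: "0 \<le> g \<Longrightarrow> 0 \<le> sqrt_dispersion g"
  using sqrt_dispersion_mono[of 0 g] by (simp add: sqrt_dispersion_def)

lemma sqrt_dispersion_mult_ln_le:
  assumes "0 < g1" "g1 \<le> g2"
  shows "sqrt_dispersion g2 * ln (1 + g1) \<le> sqrt_dispersion g1 * ln (1 + g2)"
proof -
  have square: "(sqrt_dispersion g)^2 = 1 - exp (-2 * ln (1 + g))" if "g \<ge> 0" for g
  proof -
    have "1 / (g + 1)^2 \<le> 1"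
      using that by (simp add: divide_le_eq_1)
    moreover have "exp (-2 * ln (1 + g)) = 1 / (g + 1)^2"
      using that by (simp add: exp_minus exp_double add.commute divide_inverse)
    ultimately show ?thesis
      unfolding sqrt_dispersion_def by simp
  qed
  define l1 l2 where "l1 = ln (1 + g1)" and "l2 = ln (1 + g2)"
  have l: "0 < l1" "l1 \<le> l2"
    using assms unfolding l1_def l2_def by auto
  have "(sqrt_dispersion g2)^2 / l2^2 \<le> (sqrt_dispersion g1)^2 / l1^2"
    using one_minus_exp_div_square_antimono[OF l] square[of g1] square[of g2] assms
    unfolding l1_def l2_def by simp
  then have "(sqrt_dispersion g2 * l1)^2 \<le> (sqrt_dispersion g1 * l2)^2"
    using l by (simp add: divide_simps)
  moreover have "0 \<le> sqrt_dispersion g1 * l2"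
    using sqrt_dispersion_nonneg[of g1] l assms by simp
  ultimately show ?thesis
    unfolding l1_def l2_def using power2_le_imp_le by blast
qed

definition rate_poly :: "real \<Rightarrow> real \<Rightarrow> real \<Rightarrow> real \<Rightarrow> real" where
  "rate_poly Q n g u = ln (1 + g) * u^2 - Q * sqrt_dispersion g * u - n"

lemma Ffb_eq_0_iff_rate_poly:
  assumes "m > 0" "g \<ge> 0"
  shows "Ffb e N m g = 0 \<longleftrightarrow> rate_poly (Qinv e) (N * ln 2) g (sqrt m) = 0"
proof -
  define u where "u = sqrt m"
  have u: "u > 0" "m = u^2"
    unfolding u_def using assms by auto
  have "sqrt ((1 / m) * (1 - 1 / (g + 1)^2)) = sqrt_dispersion g / u"
    unfolding sqrt_dispersion_def u using u by (simp add: real_sqrt_mult real_sqrt_divide)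
  then have "Ffb e N m g = sqrt_dispersion g / u * Qinv e / ln 2 - ln (1 + g) / ln 2 + N / u^2"
    unfolding Ffb_def u log_def by simp
  also have "\<dots> = - rate_poly (Qinv e) (N * ln 2) g u / (u^2 * ln 2)"
    unfolding rate_poly_def using u by (simp add: divide_simps) (simp add: algebra_simps power2_eq_square)
  finally show ?thesis
    using u unfolding u_def by simp
qed

lemma rate_poly_pos_of_root_less:
  assumes "0 < g1" "g1 < g2" "u > 0" "n > 0" "rate_poly Q n g1 u = 0"
  shows "rate_poly Q n g2 u > 0"
proof -
  define l1 l2 s1 s2 where "l1 = ln (1 + g1)" and "l2 = ln (1 + g2)"
    and "s1 = sqrt_dispersion g1" and "s2 = sqrt_dispersion g2"
  have l: "0 < l1" "l1 < l2"
    using assms unfolding l1_def l2_def by auto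
  have s: "s1 \<le> s2" "s2 * l1 \<le> s1 * l2"
    using sqrt_dispersion_mono[of g1 g2] sqrt_dispersion_mult_ln_le[of g1 g2] assms
    unfolding l1_def l2_def s1_def s2_def by auto
  have root: "l1 * u^2 - Q * s1 * u = n"
    using assms(5) unfolding rate_poly_def l1_def s1_def by simp
  then have "u * (l1 * u - Q * s1) > 0"
    using assms(4) by (simp add: algebra_simps power2_eq_square)
  then have first: "l1 * u - Q * s1 > 0"
    using assms(3) by (simp add: zero_less_mult_iff)
  have "(l2 - l1) * u - Q * (s2 - s1) > 0"
  proof (cases "Q \<le> 0")
    case True
    then have "Q * (s2 - s1) \<le> 0"
      using s by (simp add: mult_nonpos_nonneg)
    moreover have "(l2 - l1) * u > 0"
      using l assms(3) by simp
    ultimately show ?thesis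
      by simp
  next
    case False
    have "l1 * ((l2 - l1) * u - Q * (s2 - s1)) = (l2 - l1) * (l1 * u - Q * s1) + Q * (l2 * s1 - l1 * s2)"
      by (simp add: algebra_simps)
    moreover have "(l2 - l1) * (l1 * u - Q * s1) > 0"
      using first l by simp
    moreover have "Q * (l2 * s1 - l1 * s2) \<ge> 0"
      using False s by (simp add: algebra_simps)
    ultimately have "l1 * ((l2 - l1) * u - Q * (s2 - s1)) > 0"
      by linarith
    then show ?thesis
      using l by (simp add: zero_less_mult_iff)
  qed
  then have "u * ((l2 - l1) * u - Q * (s2 - s1)) > 0"
    using assms(3) by simp
  then show ?thesis
    using root unfolding rate_poly_def l2_def[symmetric] s2_def[symmetric]
    by (simp add: algebra_simps power2_eq_square)
qed

lemma rate_poly_nonneg_of_root_le: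
  assumes "g > 0" "n > 0" "0 < u1" "u1 \<le> u2" "rate_poly Q n g u1 = 0"
  shows "rate_poly Q n g u2 \<ge> 0"
  using quadratic_strict_mono[of "ln (1 + g)" u1 u2 "Q * sqrt_dispersion g"] assms
  unfolding rate_poly_def by (cases "u1 = u2") auto

lemma rate_poly_root_exists:
  assumes "\<gamma> > 0" "n > 0" "rate_poly Q n \<gamma> u \<ge> 0"
  obtains g where "0 < g" "g \<le> \<gamma>" "rate_poly Q n g u = 0"
proof -
  have "continuous_on {0..\<gamma>} (\<lambda>g. rate_poly Q n g u)"
    unfolding rate_poly_def sqrt_dispersion_def by (intro continuous_intros) auto
  moreover have zero: "rate_poly Q n 0 u = - n"
    unfolding rate_poly_def sqrt_dispersion_def by simp
  ultimately obtain g where "0 \<le> g" "g \<le> \<gamma>" "rate_poly Q n g u = 0"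
    using IVT'[of "\<lambda>g. rate_poly Q n g u" 0 0 \<gamma>] assms by auto
  moreover have "g \<noteq> 0"
    using zero assms(2) \<open>rate_poly Q n g u = 0\<close> by auto
  ultimately show ?thesis
    by (intro that) auto
qed

definition disp_coeff :: "real \<Rightarrow> real" where
  "disp_coeff g = sqrt (2 + g) / (1 + g)"

definition disp_coeff_deriv :: "real \<Rightarrow> real" where
  "disp_coeff_deriv g = -(3 + g) / (2 * sqrt (2 + g) * (1 + g)^2)"

definition cap_coeff :: "real \<Rightarrow> real" where
  "cap_coeff g = ln (1 + g) / g"

definition cap_coeff_deriv :: "real \<Rightarrow> real" where
  "cap_coeff_deriv g = (g / (1 + g) - ln (1 + g)) / g^2"

text \<open>For a blocklength m with rate_poly Q n g (sqrt m) = 0, the substitution v = sqrt (m * g)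
  turns the rate relation into cap_coeff g * v^2 - Q * disp_coeff g * v = n, so sqrt (m * g)
  is the following function of g alone.\<close>

definition root_mgamma :: "real \<Rightarrow> real \<Rightarrow> real \<Rightarrow> real" where
  "root_mgamma Q n g = pos_root (cap_coeff g) (Q * disp_coeff g) n"

lemma coeff_signs:
  assumes "g > 0"
  shows "disp_coeff g > 0" "cap_coeff g > 0" "disp_coeff_deriv g < 0" "cap_coeff_deriv g < 0"
proof -
  show "disp_coeff g > 0" "cap_coeff g > 0" "disp_coeff_deriv g < 0"
    using assms unfolding disp_coeff_def cap_coeff_def disp_coeff_deriv_def
    by (auto simp: divide_neg_pos)
  have "g / (1 + g) < 2 * g / (2 + g)"
    using assms by (simp add: field_simps)
  then show "cap_coeff_deriv g < 0"
    using ln_one_plus_ge[of g] assms unfolding cap_coeff_deriv_def by (simp add: divide_neg_pos)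
qed

lemma disp_coeff_has_derivative:
  assumes "g > 0"
  shows "(disp_coeff has_real_derivative disp_coeff_deriv g) (at g)"
proof -
  have "(disp_coeff has_real_derivative
          (inverse (sqrt (2 + g)) / 2 * (1 + g) - sqrt (2 + g)) / ((1 + g) * (1 + g))) (at g)"
    unfolding disp_coeff_def[abs_def] using assms by (auto intro!: derivative_eq_intros)
  moreover have "(inverse (sqrt (2 + g)) / 2 * (1 + g) - sqrt (2 + g)) / ((1 + g) * (1 + g))
                 = disp_coeff_deriv g"
    unfolding disp_coeff_deriv_def using assms by (simp add: field_simps power2_eq_square)
  ultimately show ?thesis
    by simp
qed

lemma cap_coeff_has_derivative:
  assumes "g > 0"
  shows "(cap_coeff has_real_derivative cap_coeff_deriv g) (at g)"
proof -
  have "(cap_coeff has_real_derivative (1 / (1 + g) * g - ln (1 + g)) / (g * g)) (at g)"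
    unfolding cap_coeff_def[abs_def] using assms by (auto intro!: derivative_eq_intros)
  moreover have "(1 / (1 + g) * g - ln (1 + g)) / (g * g) = cap_coeff_deriv g"
    unfolding cap_coeff_deriv_def using assms by (simp add: power2_eq_square divide_simps)
  ultimately show ?thesis
    by simp
qed

lemma rate_poly_root_eq_root_mgamma:
  assumes "g > 0" "u > 0" "n > 0" "rate_poly Q n g u = 0"
  shows "u * sqrt g = root_mgamma Q n g"
proof -
  have "sqrt_dispersion g = sqrt g * disp_coeff g"
  proof -
    have "1 - 1 / (g + 1)^2 = g * (2 + g) / (1 + g)^2"
      using assms by (simp add: divide_simps) (simp add: algebra_simps power2_eq_square)
    then show ?thesis
      unfolding sqrt_dispersion_def disp_coeff_def using assms
      by (simp add: real_sqrt_mult real_sqrt_divide)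
  qed
  moreover have "ln (1 + g) = g * cap_coeff g"
    unfolding cap_coeff_def using assms by simp
  ultimately have "cap_coeff g * (u * sqrt g)^2 - Q * disp_coeff g * (u * sqrt g) = n"
    using assms(1,4) unfolding rate_poly_def by (simp add: algebra_simps)
  then show ?thesis
    unfolding root_mgamma_def using pos_root_unique coeff_signs assms by simp
qed

lemma derivative_inequality_numerator_nonneg:
  fixes g P :: real
  assumes "g > 0" "P \<ge> g^2 / ((2 + g) * (1 + g))"
  shows "0 \<le> 6 * (2 + g) * (1 + g)^5 * P^2 + (3 + g) * g^2 * (g^2 + 3 * g + 4) * (1 + g) * P
             - (3 + g)^2 * g^4"
    (is "0 \<le> ?F P")
proof -
  define P0 where "P0 = g^2 / ((2 + g) * (1 + g))"
  have "?F P0 = g^4 * (2 * (1 + g) * (3 * g^2 + 5 * g)) / (2 + g)"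
    unfolding P0_def using assms by (simp add: divide_simps) algebra
  then have "?F P0 \<ge> 0"
    using assms by simp
  moreover have "?F P - ?F P0
      = (P - P0) * (6 * (2 + g) * (1 + g)^5 * (P + P0) + (3 + g) * g^2 * (g^2 + 3 * g + 4) * (1 + g))"
    by algebra
  moreover have "P0 \<ge> 0"
    unfolding P0_def using assms by simp
  then have "(P - P0) * (6 * (2 + g) * (1 + g)^5 * (P + P0) + (3 + g) * g^2 * (g^2 + 3 * g + 4) * (1 + g)) \<ge> 0"
    using assms unfolding P0_def[symmetric] by (intro mult_nonneg_nonneg add_nonneg_nonneg) auto
  ultimately show ?thesis
    by linarith
qed

lemma coeff_derivative_inequality:
  assumes "g > 0"
  shows "cap_coeff g * (disp_coeff_deriv g)^2 - disp_coeff g * disp_coeff_deriv g * cap_coeff_deriv g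
         \<le> 3 / 2 * (cap_coeff_deriv g)^2"
proof -
  define P where "P = ln (1 + g) - g / (1 + g)"
  have "2 * g / (2 + g) - g / (1 + g) = g^2 / ((2 + g) * (1 + g))"
    using assms by (simp add: field_simps power2_eq_square)
  then have P: "P \<ge> g^2 / ((2 + g) * (1 + g))"
    using ln_one_plus_ge[of g] assms unfolding P_def by linarith
  have s: "sqrt (2 + g) > 0" "(sqrt (2 + g))^2 = 2 + g"
    using assms by auto
  have prod: "disp_coeff g * disp_coeff_deriv g = -(3 + g) / (2 * (1 + g)^3)"
    unfolding disp_coeff_def disp_coeff_deriv_def using s assms
    by (simp add: divide_simps power2_eq_square power3_eq_cube)
  have square: "(disp_coeff_deriv g)^2 = (3 + g)^2 / (4 * (2 + g) * (1 + g)^4)"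
    unfolding disp_coeff_deriv_def using s assms
    by (simp add: power_divide power_mult_distrib) (simp add: power2_eq_square algebra_simps)
  have cap: "cap_coeff g = (P + g / (1 + g)) / g" "cap_coeff_deriv g = - P / g^2"
    unfolding cap_coeff_def cap_coeff_deriv_def P_def by auto
  have "3 / 2 * (cap_coeff_deriv g)^2
        - (cap_coeff g * (disp_coeff_deriv g)^2 - disp_coeff g * disp_coeff_deriv g * cap_coeff_deriv g)
      = (6 * (2 + g) * (1 + g)^5 * P^2 + (3 + g) * g^2 * (g^2 + 3 * g + 4) * (1 + g) * P
           - (3 + g)^2 * g^4) / (4 * (2 + g) * (1 + g)^5 * g^4)"
    unfolding mult.assoc[of "disp_coeff g"] mult.assoc[symmetric] prod square cap using assms
    by (simp add: divide_simps) algebra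
  moreover have "\<dots> \<ge> 0"
    using derivative_inequality_numerator_nonneg[OF assms P] assms by simp
  ultimately show ?thesis
    by linarith
qed

lemma root_mgamma_slope_nonneg:
  assumes "g > 0" "n > 0" "Q \<le> sqrt (2 * n / 3)"
  shows "Q * disp_coeff_deriv g - cap_coeff_deriv g * root_mgamma Q n g \<ge> 0"
proof -
  define a a' b b' V where "a = disp_coeff g" and "a' = disp_coeff_deriv g"
    and "b = cap_coeff g" and "b' = cap_coeff_deriv g" and "V = root_mgamma Q n g"
  have sg: "a > 0" "b > 0" "a' < 0" "b' < 0"
    using coeff_signs[OF assms(1)] unfolding a_def a'_def b_def b'_def by auto
  have V: "V > 0" "b * V^2 - Q * a * V = n"
    using pos_root_solves[OF sg(2) assms(2)] unfolding V_def root_mgamma_def a_def b_def by auto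
  show ?thesis
  proof (cases "Q \<le> 0")
    case True
    then have "Q * a' \<ge> 0" "b' * V \<le> 0"
      using sg V by (auto simp: mult_nonpos_nonpos mult_neg_pos less_imp_le)
    then show ?thesis
      unfolding a'_def b'_def V_def by simp
  next
    case False
    then have "Q^2 \<le> (sqrt (2 * n / 3))^2"
      using assms(3) by (intro power_mono) auto
    then have Q2: "3 / 2 * Q^2 \<le> n"
      using assms(2) by simp
    \<comment> \<open>the slope Q a' - b' v vanishes at v = y, and the bound on Q puts y below the root V\<close>
    define y where "y = Q * a' / b'"
    have y: "y > 0" "b' * y = Q * a'"
      using False sg unfolding y_def by (auto simp: mult_pos_neg divide_neg_neg)
    have "b * y^2 - Q * a * y = Q^2 * (b * a'^2 - a * a' * b') / b'^2"
      unfolding y_def using sg by (simp add: divide_simps) algebra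
    also have "\<dots> \<le> Q^2 * (3 / 2 * b'^2) / b'^2"
      using coeff_derivative_inequality[OF assms(1)] sg
      unfolding a_def a'_def b_def b'_def by (intro divide_right_mono mult_left_mono) auto
    also have "\<dots> \<le> n"
      using sg Q2 by simp
    finally have "b * y^2 - Q * a * y \<le> n" .
    then have "y \<le> V"
      using quadratic_strict_mono[of b V y "Q * a"] sg V assms(2) by force
    then have "b' * V \<le> Q * a'"
      using sg y by (metis mult_left_mono_neg less_imp_le)
    then show ?thesis
      unfolding a'_def b'_def V_def by simp
  qed
qed

lemma root_mgamma_mono:
  assumes "0 < g1" "g1 \<le> g2" "n > 0" "Q \<le> sqrt (2 * n / 3)"
  shows "root_mgamma Q n g1 \<le> root_mgamma Q n g2"
proof (rule DERIV_nonneg_imp_nondecreasing[OF assms(2)])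
  fix g
  assume "g1 \<le> g" "g \<le> g2"
  then have g: "g > 0"
    using assms by simp
  have "cap_coeff g > 0"
    using coeff_signs[OF g] by simp
  then have "(root_mgamma Q n has_real_derivative
      root_mgamma Q n g * (Q * disp_coeff_deriv g - cap_coeff_deriv g * root_mgamma Q n g)
        / sqrt ((Q * disp_coeff g)^2 + 4 * cap_coeff g * n)) (at g)"
    unfolding root_mgamma_def[abs_def]
    using has_real_derivative_pos_root[OF cap_coeff_has_derivative[OF g]
        DERIV_cmult[OF disp_coeff_has_derivative[OF g]] _ assms(3)]
    by simp
  moreover have "root_mgamma Q n g > 0"
    unfolding root_mgamma_def using pos_root_solves \<open>cap_coeff g > 0\<close> assms(3) by simp
  moreover have "sqrt ((Q * disp_coeff g)^2 + 4 * cap_coeff g * n) \<ge> 0"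
    using \<open>cap_coeff g > 0\<close> assms(3) by simp
  ultimately show "\<exists>d. (root_mgamma Q n has_real_derivative d) (at g) \<and> 0 \<le> d"
    using root_mgamma_slope_nonneg[OF g assms(3,4)] by (fastforce intro!: divide_nonneg_nonneg)
qed

text \<open>The argument only needs Q / sqrt N <= sqrt (2 ln 2 / 3) = 0.6798...,
  which is weaker than the hypothesis of the theorem.\<close>

lemma Qinv_bound_imp_le_sqrt:
  assumes "N > 0" "Q / sqrt N \<le> 2 * sqrt (ln 2) / (4 - sqrt 2)"
  shows "Q \<le> sqrt (2 * (N * ln 2) / 3)"
proof (cases "Q \<le> 0")
  case False
  have "sqrt 2 < 3 / 2"
    by (rule real_less_lsqrt) (auto simp: power2_eq_square)
  moreover have "(4 - sqrt 2)^2 = 18 - 8 * sqrt 2"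
    by (simp add: power2_eq_square algebra_simps)
  ultimately have d: "4 - sqrt 2 > 0" "6 \<le> (4 - sqrt 2)^2"
    by simp_all
  have "Q \<le> 2 * sqrt (ln 2) / (4 - sqrt 2) * sqrt N"
    using assms by (simp add: divide_le_eq)
  also have "\<dots> = sqrt (4 * (N * ln 2) / (4 - sqrt 2)^2)"
    using d by (simp add: real_sqrt_mult real_sqrt_divide)
  also have "\<dots> \<le> sqrt (4 * (N * ln 2) / 6)"
    using d assms(1) by (intro real_sqrt_le_mono divide_left_mono) auto
  finally show ?thesis
    by simp
next
  case True
  moreover have "0 \<le> sqrt (2 * (N * ln 2) / 3)"
    using assms(1) by simp
  ultimately show ?thesis
    by linarith
qed

lemma Gam_le_and_mgamma_le:
  assumes "N > 0" "Qinv e \<le> sqrt (2 * (N * ln 2) / 3)"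
    and "0 < m" "m \<le> D" "\<gamma> \<ge> 0" "Ffb e N m \<gamma> = 0"
  shows "0 < Gam e N D" "Ffb e N D (Gam e N D) = 0" "Gam e N D \<le> \<gamma>" "D * Gam e N D \<le> m * \<gamma>"
proof -
  define Q n where "Q = Qinv e" and "n = N * ln 2"
  have n: "n > 0" and D: "D > 0"
    using assms unfolding n_def by auto
  have "\<gamma> \<noteq> 0"
    using assms(1,3,6) unfolding Ffb_def by auto
  then have \<gamma>: "\<gamma> > 0"
    using assms(5) by simp
  have root: "rate_poly Q n \<gamma> (sqrt m) = 0"
    using Ffb_eq_0_iff_rate_poly assms(3,5,6) unfolding Q_def n_def by blast
  then have "rate_poly Q n \<gamma> (sqrt D) \<ge> 0"
    using rate_poly_nonneg_of_root_le[OF \<gamma> n _ _ root] assms(3,4) by simp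
  then obtain g where g: "0 < g" "g \<le> \<gamma>" "rate_poly Q n g (sqrt D) = 0"
    using rate_poly_root_exists \<gamma> n by blast
  have F: "Ffb e N D g' = 0 \<longleftrightarrow> rate_poly Q n g' (sqrt D) = 0" if "g' \<ge> 0" for g'
    using Ffb_eq_0_iff_rate_poly[OF D that] unfolding Q_def n_def .
  have Gam: "Gam e N D = g"
    unfolding Gam_def
  proof (rule the_equality)
    show "0 < g \<and> Ffb e N D g = 0"
      using g F by simp
    fix g'
    assume "0 < g' \<and> Ffb e N D g' = 0"
    then have "0 < g'" "rate_poly Q n g' (sqrt D) = 0"
      using F by auto
    then show "g' = g"
      using rate_poly_pos_of_root_less[of g' g] rate_poly_pos_of_root_less[of g g'] g D n
      by (metis linorder_neqE_linordered_idom less_irrefl real_sqrt_gt_zero)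
  qed
  have "sqrt (D * g) = root_mgamma Q n g"
    using rate_poly_root_eq_root_mgamma[OF g(1) _ n g(3)] D by (simp add: real_sqrt_mult)
  also have "\<dots> \<le> root_mgamma Q n \<gamma>"
    using root_mgamma_mono g(1,2) n assms(2) unfolding Q_def n_def by simp
  also have "\<dots> = sqrt (m * \<gamma>)"
    using rate_poly_root_eq_root_mgamma[OF \<gamma> _ n root] assms(3) by (simp add: real_sqrt_mult)
  finally have "D * g \<le> m * \<gamma>"
    by simp
  then show "0 < Gam e N D" "Ffb e N D (Gam e N D) = 0" "Gam e N D \<le> \<gamma>" "D * Gam e N D \<le> m * \<gamma>"
    unfolding Gam using g F by auto
qed

text \<open>Transmit power of a user with channel gain a and target SINR g, when the other user has
  channel gain b and target SINR h.\<close>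

definition sinr_power :: "real \<Rightarrow> real \<Rightarrow> real \<Rightarrow> real \<Rightarrow> real" where
  "sinr_power a b g h = g * (b + h * a) / (a * b * (1 - g * h))"

lemma sinr_power_solves:
  assumes "a > 0" "b > 0" "0 \<le> g" "0 \<le> h" "g * h < 1"
  defines "p \<equiv> sinr_power a b g h" and "q \<equiv> sinr_power b a h g"
  shows "p \<ge> 0" "g = p * a / (q * a + 1)"
proof -
  have den: "a * b * (1 - g * h) > 0"
    using assms by simp
  then show p: "p \<ge> 0"
    unfolding p_def sinr_power_def using assms by simp
  have q_eq: "q = h * (a + g * b) / (a * b * (1 - g * h))"
    unfolding q_def sinr_power_def by (simp add: ac_simps)
  then have q: "q \<ge> 0"
    using assms den by simp
  have "p * (a * b * (1 - g * h)) = g * (b + h * a)" "q * (a * b * (1 - g * h)) = h * (a + g * b)"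
    unfolding p_def q_eq sinr_power_def using assms(1,2,5) by simp_all
  then have "(p * a - g * (q * a + 1)) * (a * b * (1 - g * h)) = 0"
    by (simp add: algebra_simps)
  then have "p * a = g * (q * a + 1)"
    using assms(1,2,5) by simp
  moreover have "q * a + 1 > 0"
    using q assms(1) by (simp add: add_nonneg_pos)
  ultimately show "g = p * a / (q * a + 1)"
    by (simp add: eq_divide_eq)
qed

lemma sinr_power_unique:
  assumes "a > 0" "b > 0" "p \<ge> 0" "q \<ge> 0"
    and "g = p * a / (q * a + 1)" "h = q * b / (p * b + 1)"
  shows "g * h < 1" "p = sinr_power a b g h"
proof -
  have pos: "q * a + 1 > 0" "p * b + 1 > 0"
    using assms(1-4) by (auto intro: add_nonneg_pos)
  then have g: "g * (q * a + 1) = p * a" and h: "h * (p * b + 1) = q * b"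
    using assms(5,6) by simp_all
  have "g * h * ((q * a + 1) * (p * b + 1)) = (p * a) * (q * b)"
    using g h by algebra
  also have "\<dots> < (q * a + 1) * (p * b + 1)"
  proof -
    have "0 \<le> q * a + p * b"
      using assms(1-4) by simp
    then show ?thesis
      by (simp add: algebra_simps)
  qed
  finally show gh: "g * h < 1"
    using pos by (simp add: mult_less_cancel_right2)
  have "p * (a * b * (1 - g * h)) = g * (b + h * a)"
    using g h by algebra
  moreover have "a * b * (1 - g * h) \<noteq> 0"
    using assms(1,2) gh by simp
  ultimately show "p = sinr_power a b g h"
    unfolding sinr_power_def by (simp add: eq_divide_eq)
qed

lemma scaled_sinr_power_le:
  assumes "a > 0" "b > 0" "0 \<le> g" "g \<le> g'" "0 \<le> h" "h \<le> h'" "g' * h' < 1"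
    and "0 \<le> c" "c * g \<le> c' * g'"
  shows "c * sinr_power a b g h \<le> c' * sinr_power a b g' h'"
proof -
  have "g * h \<le> g' * h'"
    using assms by (intro mult_mono) auto
  then have den: "0 < a * b * (1 - g' * h')" "a * b * (1 - g' * h') \<le> a * b * (1 - g * h)"
    using assms by auto
  have cg: "0 \<le> c' * g'"
    using assms(3,8,9) by (meson mult_nonneg_nonneg order_trans)
  moreover have "b + h * a \<le> b + h' * a"
    using assms by (simp add: mult_right_mono)
  ultimately have "c * g * (b + h * a) \<le> c' * g' * (b + h' * a)"
    using assms by (auto intro: mult_mono[OF assms(9)])
  then have "c * g * (b + h * a) / (a * b * (1 - g * h)) \<le> c' * g' * (b + h' * a) / (a * b * (1 - g' * h'))"
    using den assms cg by (intro frac_le) auto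
  then show ?thesis
    unfolding sinr_power_def by (simp add: mult.assoc)
qed

lemma deadline_point_feasible_and_dominates:
  fixes h1 h2 :: complex and D1 D2 N1 N2 e1 e2 :: real
  defines "a1 \<equiv> (cmod h1)^2" and "a2 \<equiv> (cmod h2)^2"
    and "g1 \<equiv> Gam e1 N1 D1" and "g2 \<equiv> Gam e2 N2 D2"
  assumes "h1 \<noteq> 0" "h2 \<noteq> 0" "mhat > 0" "N1 > 0" "N2 > 0"
    and "Qinv e1 \<le> sqrt (2 * (N1 * ln 2) / 3)" "Qinv e2 \<le> sqrt (2 * (N2 * ln 2) / 3)"
    and "feasible h1 h2 D1 D2 mhat Pmax N1 N2 e1 e2 m1 m2 p1 p2 \<gamma>1 \<gamma>2"
  shows "feasible h1 h2 D1 D2 mhat Pmax N1 N2 e1 e2 D1 D2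
           (sinr_power a1 a2 g1 g2) (sinr_power a2 a1 g2 g1) g1 g2"
    and "D1 * sinr_power a1 a2 g1 g2 + D2 * sinr_power a2 a1 g2 g1 \<le> m1 * p1 + m2 * p2"
proof -
  have a: "a1 > 0" "a2 > 0"
    unfolding a1_def a2_def using assms(5,6) by auto
  have F: "Ffb e1 N1 m1 \<gamma>1 = 0" "Ffb e2 N2 m2 \<gamma>2 = 0"
    and m: "mhat \<le> m1" "m1 \<le> D1" "mhat \<le> m2" "m2 \<le> D2"
    and p: "p1 \<ge> 0" "p2 \<ge> 0" "p1 + p2 \<le> Pmax"
    and \<gamma>: "\<gamma>1 = p1 * a1 / (p2 * a1 + 1)" "\<gamma>2 = p2 * a2 / (p1 * a2 + 1)"
    using assms(12) unfolding feasible_def a1_def a2_def by auto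
  have \<gamma>12: "\<gamma>1 * \<gamma>2 < 1" and p1_eq: "p1 = sinr_power a1 a2 \<gamma>1 \<gamma>2"
    using sinr_power_unique[OF a p(1,2) \<gamma>] by auto
  have p2_eq: "p2 = sinr_power a2 a1 \<gamma>2 \<gamma>1"
    using sinr_power_unique[OF a(2,1) p(2,1) \<gamma>(2,1)] by auto
  have \<gamma>_nonneg: "\<gamma>1 \<ge> 0" "\<gamma>2 \<ge> 0"
    unfolding \<gamma> using a p by auto
  have g1: "0 < g1" "Ffb e1 N1 D1 g1 = 0" "g1 \<le> \<gamma>1" "D1 * g1 \<le> m1 * \<gamma>1"
    using Gam_le_and_mgamma_le[OF assms(8,10) _ m(2) \<gamma>_nonneg(1) F(1)] m assms(7)
    unfolding g1_def by auto
  have g2: "0 < g2" "Ffb e2 N2 D2 g2 = 0" "g2 \<le> \<gamma>2" "D2 * g2 \<le> m2 * \<gamma>2"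
    using Gam_le_and_mgamma_le[OF assms(9,11) _ m(4) \<gamma>_nonneg(2) F(2)] m assms(7)
    unfolding g2_def by auto
  have "g1 * g2 \<le> \<gamma>1 * \<gamma>2"
    using g1 g2 by (intro mult_mono) auto
  then have g12: "g1 * g2 < 1"
    using \<gamma>12 by simp
  have power_le: "c * sinr_power a1 a2 g1 g2 \<le> c' * p1" "d * sinr_power a2 a1 g2 g1 \<le> d' * p2"
    if "0 \<le> c" "c * g1 \<le> c' * \<gamma>1" "0 \<le> d" "d * g2 \<le> d' * \<gamma>2" for c c' d d'
    unfolding p1_eq p2_eq using that g1 g2 a \<gamma>12
    by (auto intro!: scaled_sinr_power_le simp: mult.commute)
  have "sinr_power a1 a2 g1 g2 \<ge> 0" "g1 = sinr_power a1 a2 g1 g2 * a1 / (sinr_power a2 a1 g2 g1 * a1 + 1)"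
    using sinr_power_solves[OF a, of g1 g2] g1 g2 g12 by auto
  moreover have "sinr_power a2 a1 g2 g1 \<ge> 0" "g2 = sinr_power a2 a1 g2 g1 * a2 / (sinr_power a1 a2 g1 g2 * a2 + 1)"
    using sinr_power_solves[OF a(2,1), of g2 g1] g1 g2 g12 by (auto simp: mult.commute)
  moreover have "sinr_power a1 a2 g1 g2 + sinr_power a2 a1 g2 g1 \<le> Pmax"
    using power_le[of 1 1 1 1] g1 g2 p by simp
  ultimately show "feasible h1 h2 D1 D2 mhat Pmax N1 N2 e1 e2 D1 D2
           (sinr_power a1 a2 g1 g2) (sinr_power a2 a1 g2 g1) g1 g2"
    unfolding feasible_def a1_def[symmetric] a2_def[symmetric] using g1 g2 m by auto
  show "D1 * sinr_power a1 a2 g1 g2 + D2 * sinr_power a2 a1 g2 g1 \<le> m1 * p1 + m2 * p2"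
    using power_le[of D1 m1 D2 m2] g1 g2 m assms(7) by (simp add: add_mono)
qed

theorem corollary1:
  fixes h1 h2 :: complex
    and D1 D2 mhat Pmax N1 N2 e1 e2 :: real
  assumes "h1 \<noteq> 0" "h2 \<noteq> 0" "cmod h1 > cmod h2"
    and "D1 < D2" "mhat > 0" "Pmax > 0" "N1 > 0" "N2 > 0"
    and "0 < e1" "e1 < 1" "0 < e2" "e2 < 1"
    and "Qinv e1 / sqrt N1 \<le> 2 * sqrt (ln 2) / (4 - sqrt 2)"
    and "Qinv e2 / sqrt N2 \<le> 2 * sqrt (ln 2) / (4 - sqrt 2)"
    and "\<exists>m1 m2 p1 p2 \<gamma>1 \<gamma>2. feasible h1 h2 D1 D2 mhat Pmax N1 N2 e1 e2 m1 m2 p1 p2 \<gamma>1 \<gamma>2"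
  shows "let g1 = Gam e1 N1 D1; g2 = Gam e2 N2 D2;
             a1 = (cmod h1)\<^sup>2; a2 = (cmod h2)\<^sup>2;
             p1 = (g1 * a2 + g1 * g2 * a1) / (a1 * a2 * (1 - g1 * g2));
             p2 = (g2 * a1 + g1 * g2 * a2) / (a1 * a2 * (1 - g1 * g2))
         in feasible h1 h2 D1 D2 mhat Pmax N1 N2 e1 e2 D1 D2 p1 p2 g1 g2 \<and>
            (\<forall>m1' m2' p1' p2' \<gamma>1' \<gamma>2'.
               feasible h1 h2 D1 D2 mhat Pmax N1 N2 e1 e2 m1' m2' p1' p2' \<gamma>1' \<gamma>2' \<longrightarrow>
               D1 * p1 + D2 * p2 \<le> m1' * p1' + m2' * p2')"
proof -
  define g1 g2 a1 a2 where "g1 = Gam e1 N1 D1" and "g2 = Gam e2 N2 D2"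
    and "a1 = (cmod h1)^2" and "a2 = (cmod h2)^2"
  have powers: "(g1 * a2 + g1 * g2 * a1) / (a1 * a2 * (1 - g1 * g2)) = sinr_power a1 a2 g1 g2"
    "(g2 * a1 + g1 * g2 * a2) / (a1 * a2 * (1 - g1 * g2)) = sinr_power a2 a1 g2 g1"
    unfolding sinr_power_def by (simp_all add: algebra_simps)
  note dominates = deadline_point_feasible_and_dominates[OF assms(1,2,5,7,8)
      Qinv_bound_imp_le_sqrt[OF assms(7,13)] Qinv_bound_imp_le_sqrt[OF assms(8,14)]]
  obtain m1 m2 p1 p2 \<gamma>1 \<gamma>2 where "feasible h1 h2 D1 D2 mhat Pmax N1 N2 e1 e2 m1 m2 p1 p2 \<gamma>1 \<gamma>2"
    using assms(15) by blast
  then show ?thesis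
    unfolding Let_def g1_def[symmetric] g2_def[symmetric] a1_def[symmetric] a2_def[symmetric] powers
    using dominates unfolding g1_def g2_def a1_def a2_def by blast
qed

end
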